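(* Let $\tilde\rho:\mathbb Z_{(2)}[[x,y,z]]\to\mathbb Z_{(2)}[[t]]$ be the ring morphism with $\tilde\rho(x)=t^6+t^{31}$, $\tilde\rho(y)=t^8$, $\tilde\rho(z)=t^{10}$ and $\tilde P=\ker\tilde\rho$. Then $\varphi=z^2+x^2y+y^5z^3\notin \tilde P+2\,\mathbb Z_{(2)}[[x,y,z]]$. Consequently, the kernel $\overline P$ of the analogous morphism $(\mathbb Z/2\mathbb Z)[[x,y,z]]\to(\mathbb Z/2\mathbb Z)[[t]]$ is not contained in the image of $\tilde P$ in $(\mathbb Z/2\mathbb Z)[[x,y,z]]$.
   Context: $\mathbb Z_{(2)}$ denotes the localization of $\mathbb Z$ at the prime ideal $(2)$. The morphism $(\mathbb Z/2\mathbb Z)[[x,y,z]]\to(\mathbb Z/2\mathbb Z)[[t]]$ sends $x\mapsto t^6+t^{31}$, $y\mapsto t^8$, $z\mapsto t^{10}$. *)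

theory Defs
  imports "HOL-Computational_Algebra.Formal_Power_Series" "HOL-Library.Z2"
begin

text \<open>Formal power series in three variables x, y, z over a ring 'a, represented by
  their coefficient functions: f a b c is the coefficient of x^a y^b z^c.\<close>
type_synonym 'a fps3 = "nat \<Rightarrow> nat \<Rightarrow> nat \<Rightarrow> 'a"

definition Zloc2 :: "rat set" where
  "Zloc2 = {q. \<exists>a b :: int. odd b \<and> q = of_int a / of_int b}"

definition Zloc2_fps3 :: "rat fps3 set" where
  "Zloc2_fps3 = {f. \<forall>a b c. f a b c \<in> Zloc2}"

definition mono3 :: "nat \<Rightarrow> nat \<Rightarrow> nat \<Rightarrow> 'a::zero_neq_one fps3" where
  "mono3 i j k = (\<lambda>a b c. if a = i \<and> b = j \<and> c = k then 1 else 0)"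

text \<open>Monomials x^a y^b z^c with 6a+8b+10c > n do not contribute to the coefficient of t^n,
  so the sum below is the (finite) coefficient of t^n of the substituted series.\<close>
definition rho :: "'a::comm_ring_1 fps3 \<Rightarrow> 'a fps" where
  "rho f = Abs_fps (\<lambda>n. \<Sum>a\<le>n. \<Sum>b\<le>n. \<Sum>c\<le>n.
      f a b c * fps_nth ((fps_X ^ 6 + fps_X ^ 31) ^ a * fps_X ^ (8 * b + 10 * c)) n)"

definition phi :: "'a::comm_ring_1 fps3" where
  "phi = (\<lambda>a b c. mono3 0 0 2 a b c + mono3 2 1 0 a b c + mono3 0 5 3 a b c)"

text \<open>Reduction Z_(2) \<rightarrow> Z/2Z (for q = n/d in lowest terms with d odd, q \<mapsto> n/d mod 2).\<close>
definition red2 :: "rat \<Rightarrow> bit" where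
  "red2 q = of_int (fst (quotient_of q)) / of_int (snd (quotient_of q))"

end

theory Submission
  imports Defs
begin

text \<open>Under \<open>\<rho>\<close> the monomial x^a y^b z^c becomes the sum over k \<le> a of
  (a choose k) t^(6a + 25k + 8b + 10c). The only solution of 6a + 25k + 8b + 10c = 45 with
  k \<le> a is a = 2, k = 1, b = 1, c = 0, so the coefficient of t^45 in \<open>\<rho> f\<close> is 2 f(2,1,0).
  Over \<open>\<int>\<^sub>(\<^sub>2\<^sub>)\<close> every element of the kernel therefore vanishes at x^2 y, whereas \<open>\<phi>\<close> has
  coefficient 1 there, which is not divisible by 2. Over \<open>\<int>/2\<close> the same computation gives
  \<open>\<rho> \<phi>\<close> = 2 (t^20 + t^45 + t^70) = 0, while reductions of kernel elements over
  \<open>\<int>\<^sub>(\<^sub>2\<^sub>)\<close> still vanish at x^2 y.\<close>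

lemma fps_X6_X31_power_mult_X_power:
  "(fps_X ^ 6 + fps_X ^ 31) ^ a * fps_X ^ m =
     (\<Sum>k\<le>a. fps_const (of_nat (a choose k)) * fps_X ^ (6 * a + 25 * k + m) :: 'a::comm_ring_1 fps)"
proof -
  have "(fps_X ^ 6 + fps_X ^ 31) ^ a * fps_X ^ m =
        (\<Sum>k\<le>a. of_nat (a choose k) * (fps_X ^ 31) ^ k * (fps_X ^ 6) ^ (a - k) * fps_X ^ m :: 'a fps)"
    by (subst add.commute) (simp add: binomial_ring sum_distrib_right)
  also have "\<dots> = (\<Sum>k\<le>a. fps_const (of_nat (a choose k)) * fps_X ^ (6 * a + 25 * k + m))"
  proof (rule sum.cong[OF refl])
    fix k assume "k \<in> {..a}"
    then have exponent: "6 * a + 25 * k + m = 31 * k + 6 * (a - k) + m" by auto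
    show "of_nat (a choose k) * (fps_X ^ 31) ^ k * (fps_X ^ 6) ^ (a - k) * fps_X ^ m =
          (fps_const (of_nat (a choose k)) * fps_X ^ (6 * a + 25 * k + m) :: 'a fps)"
      unfolding exponent by (simp add: fps_of_nat power_mult[symmetric] power_add[symmetric] mult.assoc)
  qed
  finally show ?thesis .
qed

lemma rho_nth:
  "fps_nth (rho f) n = (\<Sum>a\<le>n. \<Sum>b\<le>n. \<Sum>c\<le>n. f a b c *
     (\<Sum>k\<le>a. of_nat (a choose k) * (if n = 6 * a + 25 * k + (8 * b + 10 * c) then 1 else 0)))"
  unfolding rho_def by (simp add: fps_X6_X31_power_mult_X_power fps_sum_nth)

lemma weight_eq_45_iff:
  fixes a b c k :: nat
  assumes "k \<le> a"
  shows "6 * a + 25 * k + (8 * b + 10 * c) = 45 \<longleftrightarrow> a = 2 \<and> b = 1 \<and> c = 0 \<and> k = 1"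
proof
  assume weight: "6 * a + 25 * k + (8 * b + 10 * c) = 45"
  then have "k \<le> 1" by linarith
  moreover have "k \<noteq> 0"
  proof
    assume "k = 0"
    with weight have "2 * (3 * a + 4 * b + 5 * c) = 45" by simp
    then show False by presburger
  qed
  ultimately have k: "k = 1" by linarith
  with weight assms have "6 * a + 8 * b + 10 * c = 20" "1 \<le> a" by auto
  then have "a \<in> {1, 2, 3}" "b \<in> {0, 1, 2}" "c \<in> {0, 1, 2}" by auto
  with \<open>6 * a + 8 * b + 10 * c = 20\<close> k show "a = 2 \<and> b = 1 \<and> c = 0 \<and> k = 1" by auto
qed simp

lemma rho_nth_45: "fps_nth (rho f) 45 = 2 * (f 2 1 0 :: 'a::comm_ring_1)"
proof -
  have inner: "(\<Sum>k\<le>a. of_nat (a choose k) *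
                  (if 45 = 6 * a + 25 * k + (8 * b + 10 * c) then 1 else 0) :: 'a) =
               (if a = 2 \<and> b = 1 \<and> c = 0 then 2 else 0)" for a b c :: nat
  proof (cases "a = 2 \<and> b = 1 \<and> c = 0")
    case True
    then show ?thesis by (simp add: numeral_2_eq_2)
  next
    case False
    have "(45::nat) \<noteq> 6 * a + 25 * k + (8 * b + 10 * c)" if "k \<in> {..a}" for k
      using weight_eq_45_iff[of k a b c] that False by auto
    then show ?thesis
      unfolding if_not_P[OF False] by (intro sum.neutral) auto
  qed
  have "fps_nth (rho f) 45 = (\<Sum>a::nat\<le>45. \<Sum>b::nat\<le>45. \<Sum>c::nat\<le>45.
          if c = 0 then if b = 1 then if a = 2 then 2 * f 2 1 0 else 0 else 0 else 0)"
    unfolding rho_nth inner by (intro sum.cong refl) auto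
  also have "\<dots> = 2 * f 2 1 0" by simp
  finally show ?thesis .
qed

lemma kernel_coeff_x2y_eq_0:
  fixes p :: "'a::{idom, ring_char_0} fps3"
  assumes "rho p = 0"
  shows "p 2 1 0 = 0"
  using rho_nth_45[of p] assms by simp

lemma sum_if_zero:
  "(\<Sum>x\<in>A. if P then g x else 0) = (if P then sum g A else (0::'a::comm_monoid_add))"
  by simp

lemma rho_phi: "rho (phi :: 'a::comm_ring_1 fps3) = 2 * (fps_X ^ 20 + fps_X ^ 45 + fps_X ^ 70)"
proof (rule fps_ext)
  fix n
  \<comment> \<open>Conditions ordered innermost summation variable first, so that \<open>sum.delta\<close> fires.\<close>
  have mono3_mult: "mono3 i j k a b c * x = (if c = k then if b = j then if a = i then x else 0 else 0 else 0)"
    for i j k a b c and x :: 'a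
    unfolding mono3_def by simp
  have "fps_nth (rho (phi :: 'a fps3)) n =
          (if n = 20 then 2 else 0) + (if n = 45 then 2 else 0) + (if n = 70 then 2 else 0)"
    unfolding rho_nth phi_def distrib_right sum.distrib mono3_mult
    by (simp add: sum_if_zero numeral_2_eq_2)
  then show "fps_nth (rho (phi :: 'a fps3)) n = fps_nth (2 * (fps_X ^ 20 + fps_X ^ 45 + fps_X ^ 70)) n"
    by (simp add: fps_numeral_fps_const)
qed

lemma phi_x2y: "phi 2 1 0 = (1 :: 'a::comm_ring_1)"
  unfolding phi_def mono3_def by simp

lemma half_notin_Zloc2: "(1 / 2 :: rat) \<notin> Zloc2"
proof
  assume "(1 / 2 :: rat) \<in> Zloc2"
  then obtain x y :: int where "odd y" "(1 / 2 :: rat) = of_int x / of_int y"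
    unfolding Zloc2_def by blast
  then have "of_int y = (of_int (2 * x) :: rat)" by (auto simp: field_simps)
  then have "y = 2 * x" by (simp only: of_int_eq_iff)
  with \<open>odd y\<close> show False by simp
qed

lemma red2_0: "red2 0 = 0"
  unfolding red2_def by simp

lemma phi_neq_kernel_plus_double:
  fixes p h :: "rat fps3"
  assumes "rho p = 0" and "h \<in> Zloc2_fps3"
  shows "phi \<noteq> (\<lambda>a b c. p a b c + 2 * h a b c)"
proof
  assume "phi = (\<lambda>a b c. p a b c + 2 * h a b c)"
  then have "1 = p 2 1 0 + 2 * h 2 1 0"
    using phi_x2y[where 'a = rat] by metis
  with kernel_coeff_x2y_eq_0[OF assms(1)] have "h 2 1 0 = 1 / 2" by simp
  moreover have "h 2 1 0 \<in> Zloc2"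
    using assms(2) unfolding Zloc2_fps3_def by blast
  ultimately show False
    using half_notin_Zloc2 by metis
qed

lemma phi_neq_reduction_of_kernel:
  fixes p :: "rat fps3"
  assumes "rho p = 0"
  shows "(phi :: bit fps3) \<noteq> (\<lambda>a b c. red2 (p a b c))"
proof
  assume "phi = (\<lambda>a b c. red2 (p a b c))"
  then have "1 = red2 (p 2 1 0)"
    using phi_x2y[where 'a = bit] by metis
  then show False
    unfolding kernel_coeff_x2y_eq_0[OF assms] red2_0 by simp
qed

theorem mainTheorem8:
  shows "(phi :: rat fps3) \<notin>
           {(\<lambda>a b c. p a b c + 2 * h a b c) | p h.
              p \<in> Zloc2_fps3 \<and> rho p = 0 \<and> h \<in> Zloc2_fps3}
       \<and> \<not> ({f :: bit fps3. rho f = 0} \<subseteq>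
              {(\<lambda>a b c. red2 (p a b c)) | p. p \<in> Zloc2_fps3 \<and> rho p = 0})"
proof
  show "(phi :: rat fps3) \<notin>
           {(\<lambda>a b c. p a b c + 2 * h a b c) | p h.
              p \<in> Zloc2_fps3 \<and> rho p = 0 \<and> h \<in> Zloc2_fps3}"
    using phi_neq_kernel_plus_double by blast
  have "rho (phi :: bit fps3) = 0"
    by (simp add: rho_phi fps_numeral_fps_const)
  then show "\<not> ({f :: bit fps3. rho f = 0} \<subseteq>
              {(\<lambda>a b c. red2 (p a b c)) | p. p \<in> Zloc2_fps3 \<and> rho p = 0})"
    using phi_neq_reduction_of_kernel by blast
qed

end
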